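(* Under the standing setting and assumptions (A1)–(A3) described in the context, assume $\mathcal A$ is strictly convex and $\mathcal R(X)\neq\emptyset$ for all $X\in\mathcal X$. Then $|\mathcal R(X)|=1$ for all $X\in\mathcal X$.
   Context: Let $\mathcal X$ be a Hausdorff, first countable, locally convex topological vector space over $\mathbb R$, partially ordered by a partial order $\geq$ with positive cone $\mathcal X_+=\{X\in\mathcal X: X\geq 0\}$. Let $\mathcal M\subset\mathcal X$ be a vector subspace with $1<\dim\mathcal M<\infty$, carrying the relative topology, and let $\pi:\mathcal M\to\mathbb R$ be linear. Standing assumptions: (A1) there is $U\in\mathcal M\cap\mathcal X_+$ with $\pi(U)=1$; (A2) $\mathcal A\subsetneq\mathcal X$ is closed, contains $0$, and satisfies $\mathcal A+\mathcal X_+\subset\mathcal A$; (A3) the map $\rho(X)=\inf\{\pi(Z): Z\in\mathcal M,\ X+Z\in\mathcal A\}$ is finitely valued and continuous on $\mathcal X$. The optimal payoff map is $\mathcal R(X)=\{Z\in\mathcal M: X+Z\in\mathcal A,\ \pi(Z)=\rho(X)\}$; $|\cdot|$ is cardinality. $\mathcal A$ is strictly convex if $\lambda X+(1-\lambda)Y\in\mathrm{int}\,\mathcal A$ for all $\lambda\in(0,1)$ and all distinct $X,Y\in\mathcal A$. *)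

theory Defs
  imports "HOL-Analysis.Analysis"
begin

definition tvs :: "'a::{real_vector,topological_space} itself \<Rightarrow> bool" where
  "tvs _ \<longleftrightarrow> continuous_on UNIV (\<lambda>p::'a \<times> 'a. fst p + snd p)
             \<and> continuous_on UNIV (\<lambda>p::real \<times> 'a. fst p *\<^sub>R snd p)"

definition locally_convex :: "'a::{real_vector,topological_space} itself \<Rightarrow> bool" where
  "locally_convex _ \<longleftrightarrow> (\<forall>N::'a set. open N \<and> 0 \<in> N \<longrightarrow>
       (\<exists>C. open C \<and> convex C \<and> 0 \<in> C \<and> C \<subseteq> N))"

definition ordered_vs :: "('a::real_vector \<Rightarrow> 'a \<Rightarrow> bool) \<Rightarrow> bool" where
  "ordered_vs ge \<longleftrightarrow> (\<forall>x. ge x x) \<and> (\<forall>x y. ge x y \<and> ge y x \<longrightarrow> x = y)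
     \<and> (\<forall>x y z. ge x y \<and> ge y z \<longrightarrow> ge x z)
     \<and> (\<forall>x y z. ge x y \<longrightarrow> ge (x + z) (y + z))
     \<and> (\<forall>x y (c::real). ge x y \<and> c \<ge> 0 \<longrightarrow> ge (c *\<^sub>R x) (c *\<^sub>R y))"

definition pos_cone :: "('a::real_vector \<Rightarrow> 'a \<Rightarrow> bool) \<Rightarrow> 'a set" where
  "pos_cone ge = {X. ge X 0}"

definition fin_dim_gt1 :: "'a::real_vector set \<Rightarrow> bool" where
  "fin_dim_gt1 M \<longleftrightarrow> subspace M \<and>
     (\<exists>B. finite B \<and> independent B \<and> span B = M \<and> card B > 1)"

definition linear_on :: "'a::real_vector set \<Rightarrow> ('a \<Rightarrow> real) \<Rightarrow> bool" where
  "linear_on M \<pi> \<longleftrightarrow> (\<forall>x\<in>M. \<forall>y\<in>M. \<pi> (x + y) = \<pi> x + \<pi> y)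
                     \<and> (\<forall>x\<in>M. \<forall>c. \<pi> (c *\<^sub>R x) = c * \<pi> x)"

definition rho :: "'a::real_vector set \<Rightarrow> ('a \<Rightarrow> real) \<Rightarrow> 'a set \<Rightarrow> 'a \<Rightarrow> real" where
  "rho M \<pi> A X = Inf {\<pi> Z | Z. Z \<in> M \<and> X + Z \<in> A}"

definition rho_finite :: "'a::real_vector set \<Rightarrow> ('a \<Rightarrow> real) \<Rightarrow> 'a set \<Rightarrow> bool" where
  "rho_finite M \<pi> A \<longleftrightarrow> (\<forall>X. {\<pi> Z | Z. Z \<in> M \<and> X + Z \<in> A} \<noteq> {}
                            \<and> bdd_below {\<pi> Z | Z. Z \<in> M \<and> X + Z \<in> A})"

definition optR :: "'a::real_vector set \<Rightarrow> ('a \<Rightarrow> real) \<Rightarrow> 'a set \<Rightarrow> 'a \<Rightarrow> 'a set" where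
  "optR M \<pi> A X = {Z \<in> M. X + Z \<in> A \<and> \<pi> Z = rho M \<pi> A X}"

definition strictly_convex_set :: "'a::{real_vector,topological_space} set \<Rightarrow> bool" where
  "strictly_convex_set A \<longleftrightarrow> (\<forall>X\<in>A. \<forall>Y\<in>A. X \<noteq> Y \<longrightarrow>
      (\<forall>l::real. 0 < l \<and> l < 1 \<longrightarrow> l *\<^sub>R X + (1 - l) *\<^sub>R Y \<in> interior A))"

end

theory Submission
  imports Defs
begin

text \<open>If two distinct payoffs were optimal for \<open>X\<close>, their midpoint would still be an
  admissible payoff of price \<open>\<rho>(X)\<close>, and by strict convexity \<open>X\<close> plus it would lie in the
  interior of \<open>A\<close>. Subtracting a small multiple of a payoff \<open>U\<close> with \<open>\<pi>(U) = 1\<close> then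
  keeps us in \<open>A\<close> (continuity of the line \<open>t \<mapsto> X + Z - t U\<close>) while lowering the price
  below \<open>\<rho>(X)\<close>.\<close>

lemma tvs_continuous_on_line:
  assumes "tvs TYPE('a::{real_vector,topological_space})"
  shows "continuous_on UNIV (\<lambda>t::real. (P::'a) + t *\<^sub>R V)"
proof -
  have add: "continuous_on UNIV (\<lambda>p::'a \<times> 'a. fst p + snd p)"
    and scale: "continuous_on UNIV (\<lambda>p::real \<times> 'a. fst p *\<^sub>R snd p)"
    using assms unfolding tvs_def by auto
  have "continuous_on UNIV (\<lambda>t::real. t *\<^sub>R V)"
    using continuous_on_compose[OF continuous_on_Pair[OF continuous_on_id continuous_on_const]
        continuous_on_subset[OF scale]]
    by (simp add: o_def)
  then show ?thesis
    using continuous_on_compose[OF continuous_on_Pair[OF continuous_on_const]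
        continuous_on_subset[OF add]]
    by (simp add: o_def)
qed

lemma tvs_interior_line_segment:
  assumes "tvs TYPE('a::{real_vector,topological_space})" and "(P::'a) \<in> interior S"
  obtains e where "e > 0" "P + e *\<^sub>R V \<in> S"
proof -
  let ?T = "(\<lambda>t::real. P + t *\<^sub>R V) -` interior S"
  have "open ?T"
    using continuous_on_open_vimage[of UNIV, THEN iffD1, OF open_UNIV
        tvs_continuous_on_line[OF assms(1)]]
    by simp
  moreover have "0 \<in> ?T" using assms(2) by simp
  ultimately obtain e where "e > 0" "ball 0 e \<subseteq> ?T"
    using open_contains_ball by blast
  then have "e/2 \<in> ?T" by (simp add: subset_iff)
  then have "P + (e/2) *\<^sub>R V \<in> S"
    using interior_subset by blast
  with \<open>e > 0\<close> show thesis using that[of "e/2"] by simp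
qed

lemma strictly_convex_set_midpoint:
  assumes "strictly_convex_set A" "x \<in> A" "y \<in> A" "x \<noteq> y"
  shows "midpoint x y \<in> interior A"
proof -
  have "\<forall>l::real. 0 < l \<and> l < 1 \<longrightarrow> l *\<^sub>R x + (1 - l) *\<^sub>R y \<in> interior A"
    using assms unfolding strictly_convex_set_def by blast
  from this[rule_format, of "1/2"]
  have "(1/2::real) *\<^sub>R x + (1 - 1/2) *\<^sub>R y \<in> interior A" by simp
  then show ?thesis by (simp add: midpoint_def scaleR_right_distrib)
qed

lemma rho_le:
  assumes "rho_finite M \<pi> A" "Z \<in> M" "X + Z \<in> A"
  shows "rho M \<pi> A X \<le> \<pi> Z"
  unfolding rho_def
  by (rule cInf_lower) (use assms in \<open>auto simp: rho_finite_def\<close>)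

lemma rho_less_if_interior:
  fixes M :: "'a::{real_vector,topological_space} set"
  assumes "tvs TYPE('a)"
    and "subspace M" "linear_on M \<pi>" "rho_finite M \<pi> A"
    and "U \<in> M" "\<pi> U > 0"
    and "Z \<in> M" "X + Z \<in> interior A"
  shows "rho M \<pi> A X < \<pi> Z"
proof -
  obtain e where "e > 0" and inA: "X + Z + e *\<^sub>R (- U) \<in> A"
    using tvs_interior_line_segment[OF assms(1,8)] by blast
  define W where "W = Z + (- e) *\<^sub>R U"
  have "(- e) *\<^sub>R U \<in> M" using assms(2,5) by (rule subspace_scale)
  then have "W \<in> M" unfolding W_def using assms(2,7) subspace_add by blast
  have "\<pi> W = \<pi> Z + \<pi> ((- e) *\<^sub>R U)"
    using assms(3,7) \<open>(- e) *\<^sub>R U \<in> M\<close> unfolding W_def linear_on_def by blast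
  also have "\<pi> ((- e) *\<^sub>R U) = - e * \<pi> U"
    using assms(3,5) unfolding linear_on_def by blast
  finally have price: "\<pi> W = \<pi> Z - e * \<pi> U" by simp
  have "X + W \<in> A" using inA unfolding W_def by (simp add: algebra_simps)
  with \<open>W \<in> M\<close> have "rho M \<pi> A X \<le> \<pi> Z - e * \<pi> U"
    using rho_le[OF assms(4)] price by metis
  then show ?thesis using mult_pos_pos[OF \<open>e > 0\<close> assms(6)] by linarith
qed

lemma optR_midpoint:
  assumes "subspace M" "linear_on M \<pi>" "Z1 \<in> optR M \<pi> A X" "Z2 \<in> optR M \<pi> A X"
  shows "midpoint Z1 Z2 \<in> M" "\<pi> (midpoint Z1 Z2) = rho M \<pi> A X"
proof -
  have "(1/2::real) *\<^sub>R Z1 \<in> M" "(1/2::real) *\<^sub>R Z2 \<in> M"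
    using assms(1,3,4) by (auto simp: optR_def subspace_scale)
  then show "midpoint Z1 Z2 \<in> M" "\<pi> (midpoint Z1 Z2) = rho M \<pi> A X"
    using assms by (auto simp: midpoint_def optR_def linear_on_def subspace_add
        scaleR_right_distrib)
qed

lemma optR_subsingleton:
  fixes M :: "'a::{real_vector,topological_space} set"
  assumes "tvs TYPE('a)"
    and "subspace M" "linear_on M \<pi>" "rho_finite M \<pi> A"
    and "U \<in> M" "\<pi> U > 0"
    and "strictly_convex_set A"
    and "Z1 \<in> optR M \<pi> A X" "Z2 \<in> optR M \<pi> A X"
  shows "Z1 = Z2"
proof (rule ccontr)
  assume "Z1 \<noteq> Z2"
  have "X + Z1 \<in> A" "X + Z2 \<in> A" using assms(8,9) by (auto simp: optR_def)
  with \<open>Z1 \<noteq> Z2\<close> have "midpoint (X + Z1) (X + Z2) \<in> interior A"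
    using strictly_convex_set_midpoint[OF assms(7)] by simp
  moreover have "midpoint (X + Z1) (X + Z2) = X + midpoint Z1 Z2"
    by (simp add: midpoint_def algebra_simps flip: scaleR_add_left)
  ultimately have "rho M \<pi> A X < \<pi> (midpoint Z1 Z2)"
    using rho_less_if_interior[OF assms(1-6) optR_midpoint(1)[OF assms(2,3,8,9)]] by simp
  then show False using optR_midpoint(2)[OF assms(2,3,8,9)] by simp
qed

theorem mainTheorem14:
  fixes ge :: "'a::{real_vector,t2_space,first_countable_topology} \<Rightarrow> 'a \<Rightarrow> bool"
    and M :: "'a set" and \<pi> :: "'a \<Rightarrow> real" and A :: "'a set"
  assumes tvs: "tvs TYPE('a)"
    and lc: "locally_convex TYPE('a)"
    and ord: "ordered_vs ge"
    and M: "fin_dim_gt1 M"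
    and pi_lin: "linear_on M \<pi>"
    and A1: "\<exists>U\<in>M \<inter> pos_cone ge. \<pi> U = 1"
    and A2: "closed A" "A \<noteq> UNIV" "0 \<in> A" "\<forall>X\<in>A. \<forall>P\<in>pos_cone ge. X + P \<in> A"
    and A3: "rho_finite M \<pi> A" "continuous_on UNIV (rho M \<pi> A)"
    and sc: "strictly_convex_set A"
    and ne: "\<forall>X. optR M \<pi> A X \<noteq> {}"
  shows "\<forall>X. card (optR M \<pi> A X) = 1"
proof
  fix X
  obtain U where U: "U \<in> M" "\<pi> U = 1" using A1 by auto
  have "subspace M" using M unfolding fin_dim_gt1_def by auto
  obtain Z where "Z \<in> optR M \<pi> A X" using ne by auto
  then have "optR M \<pi> A X = {Z}"
    using optR_subsingleton[OF tvs \<open>subspace M\<close> pi_lin A3(1) U(1) _ sc] U(2) by fastforce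
  then show "card (optR M \<pi> A X) = 1" by simp
qed

end
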